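(* Let $p\ge5$ and consider the white metallic tree $\mathcal W_\pi$ under the penultimate assignment. Then (a) $\pi$ possesses the preferred son property: for every node $\nu$, exactly one son of $\nu$ has metallic code ending with $0$, and the metallic code of that son is the metallic code of $\nu$ followed by $0$; and (b) a node of $\mathcal W_\pi$ is black if and only if its metallic code ends with the digit $0$.
   Context: Fix $p\ge5$. Metallic numbers: $m_{-1}=0$, $m_0=1$, $m_{n+2}=(p-2)m_{n+1}-m_n$. With $d=p-3$, $c=p-4$, the metallic code of a positive integer $n$ is the unique word $a_k\cdots a_0$ over $\{0,\dots,p-3\}$ with $a_k\ne0$, $n=\sum a_im_i$, containing no factor $d\,c^j\,d$ ($j\ge0$). White metallic tree under an assignment $\alpha$, $\mathcal W_\alpha$: nodes are the positive integers, each black or white; root $1$ is white; nodes are processed in increasing order and node $\nu$ receives $p-2$ sons if white, $p-3$ if black, namely the smallest integers not yet used, in increasing order; the assignment specifies for each node the position of its unique black son among its sons (leftmost = position $1$), the other sons being white. The penultimate assignment $\pi$ puts the black son at the penultimate position. *)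

theory Defs
  imports Main
begin

text \<open>Metallic numbers m_0 = 1, m_1 = p-2, m_(n+2) = (p-2) m_(n+1) - m_n
  (this is the recurrence with m_(-1) = 0 shifted to nonnegative indices).\<close>
fun metal :: "nat \<Rightarrow> nat \<Rightarrow> int" where
  "metal p 0 = 1"
| "metal p (Suc 0) = int p - 2"
| "metal p (Suc (Suc n)) = (int p - 2) * metal p (Suc n) - metal p n"

text \<open>A word a_k ... a_0 is the list [a_k, ..., a_0] (most significant digit first);
  its value is sum a_i m_i.\<close>
definition mval :: "nat \<Rightarrow> nat list \<Rightarrow> int" where
  "mval p w = (\<Sum>i<length w. int (rev w ! i) * metal p i)"

definition is_mcode :: "nat \<Rightarrow> nat list \<Rightarrow> nat \<Rightarrow> bool" where
  "is_mcode p w n \<longleftrightarrow>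
     w \<noteq> [] \<and> hd w \<noteq> 0 \<and> set w \<subseteq> {0..p-3} \<and> mval p w = int n \<and>
     \<not> (\<exists>u v j. w = u @ [p-3] @ replicate j (p-4) @ [p-3] @ v)"

definition mcode :: "nat \<Rightarrow> nat \<Rightarrow> nat list" where
  "mcode p n = (THE w. is_mcode p w n)"

text \<open>Colours: True = black, False = white.  An assignment \<alpha> gives, for a node \<nu>
  having s sons, the position \<alpha> \<nu> s (leftmost = 1) of its unique black son.
  (The number of sons of \<nu> is determined by its colour, so this is the same as
  specifying a position for each node.)\<close>
type_synonym assignment = "nat \<Rightarrow> nat \<Rightarrow> nat"

definition nsons :: "nat \<Rightarrow> bool \<Rightarrow> nat" where
  "nsons p b = (if b then p - 3 else p - 2)"

definition son_colours :: "nat \<Rightarrow> assignment \<Rightarrow> nat \<Rightarrow> bool \<Rightarrow> bool list" where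
  "son_colours p \<alpha> \<nu> b = map (\<lambda>i. i = \<alpha> \<nu> (nsons p b)) [1..<nsons p b + 1]"

text \<open>colours p \<alpha> k = list of colours of the nodes 1, 2, ..., N_k already created
  after nodes 1..k have been processed (entry i is the colour of node i+1).
  Root 1 is white; processing node k+1 appends its sons (smallest unused integers,
  in increasing order).\<close>
fun colours :: "nat \<Rightarrow> assignment \<Rightarrow> nat \<Rightarrow> bool list" where
  "colours p \<alpha> 0 = [False]"
| "colours p \<alpha> (Suc k) =
     colours p \<alpha> k @ son_colours p \<alpha> (Suc k) (colours p \<alpha> k ! k)"

definition is_black :: "nat \<Rightarrow> assignment \<Rightarrow> nat \<Rightarrow> bool" where
  "is_black p \<alpha> \<nu> = colours p \<alpha> \<nu> ! (\<nu> - 1)"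

definition sons :: "nat \<Rightarrow> assignment \<Rightarrow> nat \<Rightarrow> nat set" where
  "sons p \<alpha> \<nu> = {length (colours p \<alpha> (\<nu> - 1)) + 1 .. length (colours p \<alpha> \<nu>)}"

definition penultimate :: assignment where
  "penultimate \<nu> s = s - 1"

definition preferred_son_property :: "nat \<Rightarrow> assignment \<Rightarrow> bool" where
  "preferred_son_property p \<alpha> \<longleftrightarrow>
     (\<forall>\<nu>\<ge>1. (\<exists>!s. s \<in> sons p \<alpha> \<nu> \<and> last (mcode p s) = 0) \<and>
             (\<forall>s\<in>sons p \<alpha> \<nu>. last (mcode p s) = 0 \<longrightarrow> mcode p s = mcode p \<nu> @ [0]))"

end

theory Submission
  imports Defs
begin

text \<open>
  An admissible word (digits at most d = p-3, no factor d c^j d) of length L has value below m_L,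
  and even below m_L - m_(L-1) unless it starts with c^j d. Hence the admissible words of length L
  represent 0, ..., m_L - 1 bijectively, greedily and in lexicographic order: codes exist, are
  unique, and comparing codes digit by digit compares the numbers.

  Let mshift n be the number whose code is that of n followed by 0, and mtrunc n the number whose
  code is that of n with its last digit removed. The recurrence of the metallic numbers gives
  mshift n = (p-2) n - mtrunc n; mshift is strictly increasing and mtrunc is its floor inverse.
  So the numbers whose code ends in 0 are exactly the values of mshift, and
  mshift n - mshift (n-1) is p-3 or p-2 according to whether the code of n ends in 0 or not,
  which is the number of sons of n if exactly these nodes are black. Along the processing order
  the sons of n are therefore mshift (n-1) + 2, ..., mshift n + 1, and the only one among them
  whose code ends in 0 is the penultimate one, mshift n.
\<close>

definition metal_prev :: "nat \<Rightarrow> nat \<Rightarrow> int" where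
  "metal_prev p k = (if k = 0 then 0 else metal p (k - 1))"

lemma metal_prev_0 [simp]: "metal_prev p 0 = 0"
  by (simp add: metal_prev_def)

lemma metal_prev_Suc [simp]: "metal_prev p (Suc k) = metal p k"
  by (simp add: metal_prev_def)

lemma metal_Suc: "metal p (Suc k) = (int p - 2) * metal p k - metal_prev p k"
  by (cases k) simp_all

lemma mval_Nil [simp]: "mval p [] = 0"
  by (simp add: mval_def)

lemma mval_Cons: "mval p (a # w) = int a * metal p (length w) + mval p w"
proof -
  have "mval p (a # w) = (\<Sum>i<Suc (length w). int ((rev w @ [a]) ! i) * metal p i)"
    by (simp add: mval_def)
  also have "\<dots> = (\<Sum>i<length w. int ((rev w @ [a]) ! i) * metal p i) + int a * metal p (length w)"
    by (simp add: nth_append)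
  also have "(\<Sum>i<length w. int ((rev w @ [a]) ! i) * metal p i) = mval p w"
    unfolding mval_def by (intro sum.cong) (auto simp: nth_append)
  finally show ?thesis by simp
qed

lemma mval_singleton [simp]: "mval p [x] = int x"
  by (simp add: mval_Cons)

lemma mval_zero_Cons [simp]: "mval p (0 # w) = mval p w"
  by (simp add: mval_Cons)

lemma mval_dropWhile_zero: "mval p (dropWhile (\<lambda>x. x = 0) w) = mval p w"
  by (induction w) auto

lemma mval_snoc: "mval p (w @ [x]) = int x + mval p (w @ [0])"
  by (induction w) (simp_all add: mval_Cons)

lemma mval_snoc_zero: "mval p (w @ [0]) = (int p - 2) * mval p w - mval p (butlast w)"
proof (induction w)
  case (Cons a w)
  define L where "L = length w"
  have mval_butlast: "mval p (butlast (a # w)) = int a * metal_prev p L + mval p (butlast w)"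
    by (auto simp: L_def mval_Cons metal_prev_def)
  have "mval p ((a # w) @ [0]) = int a * metal p (Suc L) + mval p (w @ [0])"
    by (simp add: mval_Cons L_def)
  also have "\<dots> = int a * ((int p - 2) * metal p L - metal_prev p L)
                  + (int p - 2) * mval p w - mval p (butlast w)"
    using Cons.IH by (simp add: metal_Suc)
  also have "\<dots> = (int p - 2) * mval p (a # w) - mval p (butlast (a # w))"
    using mval_butlast by (simp add: mval_Cons L_def algebra_simps)
  finally show ?case .
qed simp

locale metallic =
  fixes p :: nat
  assumes p_ge_5: "5 \<le> p"
begin

lemma metal_pos_and_prev_le: "1 \<le> metal p k \<and> metal_prev p k \<le> metal p k"
proof (induction k)
  case (Suc k)
  have "3 * metal p k \<le> (int p - 2) * metal p k"
    using Suc p_ge_5 by (intro mult_right_mono) auto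
  then show ?case
    using Suc metal_Suc[of p k] by (simp only: metal_prev_Suc) linarith
qed simp

lemma metal_pos: "1 \<le> metal p k"
  using metal_pos_and_prev_le by blast

lemma metal_prev_le: "metal_prev p k \<le> metal p k"
  using metal_pos_and_prev_le by blast

lemma metal_prev_nonneg: "0 \<le> metal_prev p k"
  using metal_pos[of "k - 1"] by (simp add: metal_prev_def)

lemma metal_less_Suc: "metal p k < metal p (Suc k)"
proof -
  have "3 * metal p k \<le> (int p - 2) * metal p k"
    using metal_pos[of k] p_ge_5 by (intro mult_right_mono) auto
  then show ?thesis
    using metal_prev_le[of k] metal_pos[of k] metal_Suc[of p k] by linarith
qed

lemma strict_mono_metal: "strict_mono (metal p)"
  by (simp add: strict_mono_Suc_iff metal_less_Suc)

lemma metal_gt: "int k < metal p k"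
proof (induction k)
  case (Suc k)
  then show ?case
    using metal_less_Suc[of k] by simp
qed simp

lemma mval_nonneg: "0 \<le> mval p w"
  unfolding mval_def using metal_pos by (intro sum_nonneg mult_nonneg_nonneg) (auto intro: order_trans[OF zero_le_one])

definition forbidden_free :: "nat list \<Rightarrow> bool" where
  "forbidden_free w \<longleftrightarrow> \<not> (\<exists>u v j. w = u @ [p-3] @ replicate j (p-4) @ [p-3] @ v)"

fun starts_c_star_d :: "nat list \<Rightarrow> bool" where
  "starts_c_star_d [] \<longleftrightarrow> False"
| "starts_c_star_d (a # w) \<longleftrightarrow> a = p - 3 \<or> a = p - 4 \<and> starts_c_star_d w"

lemma starts_c_star_d_iff: "starts_c_star_d w \<longleftrightarrow> (\<exists>j v. w = replicate j (p-4) @ (p-3) # v)"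
proof (induction w)
  case (Cons a w)
  show ?case
  proof
    assume "starts_c_star_d (a # w)"
    then consider "a = p - 3" | "a = p - 4" "\<exists>j v. w = replicate j (p-4) @ (p-3) # v"
      using Cons.IH by auto
    then show "\<exists>j v. a # w = replicate j (p-4) @ (p-3) # v"
    proof cases
      case 1
      then show ?thesis by (metis append_Nil replicate_0)
    next
      case 2
      then show ?thesis by (metis append_Cons replicate_Suc)
    qed
  next
    assume "\<exists>j v. a # w = replicate j (p-4) @ (p-3) # v"
    then obtain j v where "a # w = replicate j (p-4) @ (p-3) # v" by blast
    then show "starts_c_star_d (a # w)"
      using Cons.IH by (cases j) auto
  qed
qed simp

lemma starts_c_star_d_snoc_zero: "starts_c_star_d (w @ [0]) \<longleftrightarrow> starts_c_star_d w"
  using p_ge_5 by (induction w) auto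

lemma forbidden_free_Nil [simp]: "forbidden_free []"
  by (simp add: forbidden_free_def)

lemma forbidden_free_Cons:
  "forbidden_free (a # w) \<longleftrightarrow> forbidden_free w \<and> \<not> (a = p - 3 \<and> starts_c_star_d w)"
  unfolding forbidden_free_def starts_c_star_d_iff
  by (auto simp: Cons_eq_append_conv)

lemma forbidden_free_butlast: "forbidden_free (w @ [x]) \<Longrightarrow> forbidden_free w"
  unfolding forbidden_free_def by (metis append.assoc)

definition admissible :: "nat list \<Rightarrow> bool" where
  "admissible w \<longleftrightarrow> set w \<subseteq> {0..p-3} \<and> forbidden_free w"

lemma admissible_Nil [simp]: "admissible []"
  by (simp add: admissible_def)

lemma admissible_Cons:
  "admissible (a # w) \<longleftrightarrow> a \<le> p - 3 \<and> admissible w \<and> \<not> (a = p - 3 \<and> starts_c_star_d w)"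
  by (auto simp: admissible_def forbidden_free_Cons)

lemma admissible_appendD: "admissible (u @ w) \<Longrightarrow> admissible w"
  by (induction u) (auto simp: admissible_Cons)

lemma admissible_butlast: "admissible (w @ [x]) \<Longrightarrow> admissible w"
  by (auto simp: admissible_def forbidden_free_butlast)

lemma admissible_snoc_zero: "admissible w \<Longrightarrow> admissible (w @ [0])"
  by (induction w) (auto simp: admissible_Cons starts_c_star_d_snoc_zero)

lemma is_mcode_iff:
  "is_mcode p w n \<longleftrightarrow> w \<noteq> [] \<and> hd w \<noteq> 0 \<and> admissible w \<and> mval p w = int n"
  unfolding is_mcode_def admissible_def forbidden_free_def by auto

lemma admissible_mval_bound:
  "admissible w \<Longrightarrow>
     mval p w + (if starts_c_star_d w then 0 else metal_prev p (length w)) < metal p (length w)"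
\<comment> \<open>the sharper bound for words not starting with c...cd carries the induction past a leading d\<close>
proof (induction w)
  case (Cons a w)
  define m where "m = metal p (length w)"
  define m' where "m' = metal_prev p (length w)"
  have a: "a \<le> p - 3" "admissible w" "a = p - 3 \<Longrightarrow> \<not> starts_c_star_d w"
    using Cons.prems by (auto simp: admissible_Cons)
  have IH: "mval p w + (if starts_c_star_d w then 0 else m') < m"
    using Cons.IH[OF a(2)] unfolding m_def m'_def .
  have m': "0 \<le> m'" "m' \<le> m"
    using metal_prev_nonneg metal_prev_le by (simp_all add: m_def m'_def)
  have goal: "int a * m + mval p w + (if starts_c_star_d (a # w) then 0 else m)
                < (int p - 2) * m - m'"
  proof -
    consider "a = p - 3" | "a = p - 4" | "a \<le> p - 5"
      using a(1) by linarith
    then show ?thesis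
    proof cases
      case 1
      then show ?thesis using IH a(3) p_ge_5 by (simp add: algebra_simps)
    next
      case 2
      then show ?thesis using IH m' p_ge_5 by (auto simp: algebra_simps)
    next
      case 3
      then have "int a * m \<le> (int p - 5) * m"
        using p_ge_5 metal_pos[of "length w"] by (intro mult_right_mono) (auto simp: m_def)
      moreover have "\<not> starts_c_star_d (a # w)"
        using 3 p_ge_5 by auto
      ultimately show ?thesis using IH m' by (auto simp: algebra_simps split: if_splits)
    qed
  qed
  moreover have "mval p (a # w) = int a * m + mval p w" "metal_prev p (length (a # w)) = m"
    "metal p (length (a # w)) = (int p - 2) * m - m'"
    by (simp_all add: mval_Cons metal_Suc m_def m'_def)
  ultimately show ?case
    by (simp only:)
qed simp

lemma admissible_mval_less: "admissible w \<Longrightarrow> mval p w < metal p (length w)"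
  using admissible_mval_bound[of w] metal_prev_nonneg[of "length w"] by (auto split: if_splits)

lemma metal_le_mval_if_starts_c_star_d:
  "starts_c_star_d w \<Longrightarrow> metal p (length w) \<le> mval p w + metal_prev p (length w)"
proof (induction w)
  case (Cons a w)
  have "a = p - 3 \<or> a = p - 4 \<and> starts_c_star_d w"
    using Cons.prems by simp
  then show ?case
    using Cons.IH p_ge_5 mval_nonneg[of w] metal_prev_nonneg[of "length w"]
    by (auto simp: mval_Cons metal_Suc algebra_simps)
qed simp

lemma admissible_word_exists:
  "0 \<le> n \<Longrightarrow> n < metal p L \<Longrightarrow> \<exists>w. length w = L \<and> admissible w \<and> mval p w = n"
proof (induction L arbitrary: n)
  case 0
  then show ?case by simp
next
  case (Suc L)
  define m where "m = metal p L"
  have m_pos: "0 < m"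
    using metal_pos[of L] by (simp add: m_def)
  define q where "q = n div m"
  define r where "r = n mod m"
  have n: "n = q * m + r" and r: "0 \<le> r" "r < m"
    using m_pos by (simp_all add: q_def r_def)
  have n_less: "n < (int p - 2) * m - metal_prev p L"
    using Suc.prems(2) by (simp add: metal_Suc m_def)
  have "0 \<le> q"
    using Suc.prems(1) m_pos by (simp add: q_def pos_imp_zdiv_nonneg_iff)
  moreover have "q \<le> int p - 3"
  proof (rule ccontr)
    assume "\<not> q \<le> int p - 3"
    then have "(int p - 2) * m \<le> q * m"
      using m_pos by (intro mult_right_mono) auto
    then show False
      using n n_less r metal_prev_nonneg[of L] by linarith
  qed
  ultimately obtain a where a: "int a = q" "a \<le> p - 3"
    using p_ge_5 by (intro that[of "nat q"]) auto
  obtain w where w: "length w = L" "admissible w" "mval p w = r"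
    using Suc.IH[of r] r by (auto simp: m_def)
  \<comment> \<open>a leading digit p-3 followed by a word starting with c...cd would give n \<ge> metal p (Suc L)\<close>
  have "\<not> (a = p - 3 \<and> starts_c_star_d w)"
  proof
    assume "a = p - 3 \<and> starts_c_star_d w"
    then have "a = p - 3" "m \<le> r + metal_prev p L"
      using metal_le_mval_if_starts_c_star_d[of w] w by (auto simp: m_def)
    then have "(int p - 2) * m - metal_prev p L \<le> n"
      using n a(1) p_ge_5 by (simp add: algebra_simps)
    then show False
      using n_less by linarith
  qed
  then have "admissible (a # w)"
    using w(2) a(2) by (simp add: admissible_Cons)
  moreover have "mval p (a # w) = n"
    using n w a(1) by (simp add: mval_Cons m_def)
  ultimately show ?case
    using w(1) by (intro exI[of _ "a # w"]) auto
qed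

lemma is_mcode_exists: "1 \<le> n \<Longrightarrow> \<exists>w. is_mcode p w n"
proof -
  assume n: "1 \<le> n"
  obtain w where w: "admissible w" "mval p w = int n"
    using admissible_word_exists[of "int n" n] metal_gt[of n] by auto
  define w' where "w' = dropWhile (\<lambda>x. x = 0) w"
  have "admissible w'"
    using admissible_appendD[of "takeWhile (\<lambda>x. x = 0) w" w'] w(1) by (simp add: w'_def)
  moreover have "mval p w' = int n"
    using w(2) by (simp add: w'_def mval_dropWhile_zero)
  moreover from this have "w' \<noteq> []"
    using n by auto
  moreover from this have "hd w' \<noteq> 0"
    using hd_dropWhile[of "\<lambda>x. x = 0" w] by (simp add: w'_def)
  ultimately show ?thesis
    by (auto simp: is_mcode_iff)
qed

lemma mval_Cons_less_Cons:
  assumes "admissible w" "a < b" "length u = length w"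
  shows "mval p (a # w) < mval p (b # u)"
proof -
  define m where "m = metal p (length w)"
  have "mval p w < m"
    using admissible_mval_less[OF assms(1)] by (simp add: m_def)
  moreover have "(int a + 1) * m \<le> int b * m"
    using assms(2) metal_pos[of "length w"] by (intro mult_right_mono) (auto simp: m_def)
  ultimately show ?thesis
    using assms(3) mval_nonneg[of u] by (simp add: mval_Cons m_def algebra_simps)
qed

lemma admissible_mval_inj:
  "admissible w \<Longrightarrow> admissible u \<Longrightarrow> length w = length u \<Longrightarrow> mval p w = mval p u \<Longrightarrow> w = u"
proof (induction w arbitrary: u)
  case (Cons a w)
  then obtain b u' where u: "u = b # u'"
    by (cases u) auto
  have adm: "admissible w" "admissible u'"
    using Cons.prems u by (simp_all add: admissible_Cons)
  have "\<not> a < b" "\<not> b < a"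
    using mval_Cons_less_Cons[of w a b u'] mval_Cons_less_Cons[of u' b a w] adm Cons.prems u
    by auto
  then have "a = b"
    by simp
  then show ?case
    using Cons.IH[of u'] adm Cons.prems u by (simp add: mval_Cons)
qed simp

lemma metal_le_mval: "w \<noteq> [] \<Longrightarrow> hd w \<noteq> 0 \<Longrightarrow> metal p (length w - 1) \<le> mval p w"
proof (cases w)
  case (Cons a w')
  moreover assume "hd w \<noteq> 0"
  ultimately have "metal p (length w') \<le> int a * metal p (length w')"
    using metal_pos[of "length w'"] by simp
  then show ?thesis
    using Cons mval_nonneg[of w'] by (simp add: mval_Cons)
qed simp

lemma mval_less_if_length_less:
  assumes "admissible w" "u \<noteq> []" "hd u \<noteq> 0" "length w < length u"
  shows "mval p w < mval p u"
proof -
  have "mval p w < metal p (length w)"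
    using assms(1) by (rule admissible_mval_less)
  also have "\<dots> \<le> metal p (length u - 1)"
    using assms(4) strict_mono_metal by (simp add: strict_mono_less_eq)
  also have "\<dots> \<le> mval p u"
    using assms(2,3) by (rule metal_le_mval)
  finally show ?thesis .
qed

lemma is_mcode_unique: "is_mcode p w n \<Longrightarrow> is_mcode p u n \<Longrightarrow> w = u"
proof -
  assume w: "is_mcode p w n" and u: "is_mcode p u n"
  then have "\<not> length w < length u" "\<not> length u < length w"
    using mval_less_if_length_less[of w u] mval_less_if_length_less[of u w]
    by (auto simp: is_mcode_iff)
  then show ?thesis
    using admissible_mval_inj[of w u] w u by (simp add: is_mcode_iff)
qed

lemma mcode_eqI: "is_mcode p w n \<Longrightarrow> mcode p n = w"
  unfolding mcode_def by (rule the_equality) (auto intro: is_mcode_unique)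

lemma is_mcode_mcode: "1 \<le> n \<Longrightarrow> is_mcode p (mcode p n) n"
  using is_mcode_exists mcode_eqI by blast

lemma mcode_one: "mcode p 1 = [1]"
  using p_ge_5 by (intro mcode_eqI) (simp add: is_mcode_iff admissible_Cons mval_Cons)

lemma mval_snoc_less_snoc_zero:
  "admissible (w @ [x]) \<Longrightarrow> admissible v \<Longrightarrow> length v = length w \<Longrightarrow> mval p w < mval p v \<Longrightarrow>
     mval p (w @ [x]) < mval p (v @ [0])"
proof (induction w arbitrary: v)
  case (Cons a w)
  obtain b v' where v: "v = b # v'"
    using Cons.prems(3) by (cases v) auto
  have adm: "admissible (w @ [x])" "admissible w" "admissible v'"
    using Cons.prems v by (auto simp: admissible_Cons dest: admissible_butlast)
  consider "a < b" | "b < a" | "a = b"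
    by linarith
  then show ?case
  proof cases
    case 1
    then show ?thesis
      using mval_Cons_less_Cons[OF adm(1) 1, of "v' @ [0]"] Cons.prems(3) v by simp
  next
    case 2
    then have "mval p v < mval p (a # w)"
      using mval_Cons_less_Cons[OF adm(3) 2, of w] Cons.prems(3) v by simp
    then show ?thesis
      using Cons.prems(4) by simp
  next
    case 3
    then have "mval p (w @ [x]) < mval p (v' @ [0])"
      using Cons.IH[of v'] Cons.prems(3,4) adm v by (simp add: mval_Cons)
    then show ?thesis
      using 3 Cons.prems(3) v by (simp add: mval_Cons)
  qed
qed simp

lemma mval_snoc_less_mcode_snoc_zero:
  assumes "is_mcode p w k" "is_mcode p v l" "k < l" "admissible (w @ [x])"
  shows "mval p (w @ [x]) < mval p (v @ [0])"
proof (cases "length w < length v")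
  case True
  then show ?thesis
    using mval_less_if_length_less[OF assms(4), of "v @ [0]"] assms(2) by (simp add: is_mcode_iff)
next
  case False
  moreover have "\<not> length v < length w"
    using mval_less_if_length_less[of v w] assms(1-3) by (auto simp: is_mcode_iff)
  ultimately show ?thesis
    using mval_snoc_less_snoc_zero[OF assms(4)] assms(1-3) by (simp add: is_mcode_iff)
qed

lemma is_mcode_pos: "is_mcode p w n \<Longrightarrow> 1 \<le> n"
  using metal_le_mval[of w] metal_pos[of "length w - 1"] by (simp add: is_mcode_iff)

text \<open>0 has no code, so mcode p 0 is an unspecified THE-value; both functions are set to 0 there.\<close>

definition mshift :: "nat \<Rightarrow> nat" where
  "mshift n = (if n = 0 then 0 else nat (mval p (mcode p n @ [0])))"

definition mtrunc :: "nat \<Rightarrow> nat" where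
  "mtrunc n = (if n = 0 then 0 else nat (mval p (butlast (mcode p n))))"

lemma is_mcode_mshift: "1 \<le> n \<Longrightarrow> is_mcode p (mcode p n @ [0]) (mshift n)"
  using is_mcode_mcode[of n] mval_nonneg[of "mcode p n @ [0]"]
  by (auto simp: is_mcode_iff mshift_def admissible_snoc_zero)

lemma mcode_mshift: "1 \<le> n \<Longrightarrow> mcode p (mshift n) = mcode p n @ [0]"
  by (rule mcode_eqI) (rule is_mcode_mshift)

lemma int_mshift: "1 \<le> n \<Longrightarrow> int (mshift n) = mval p (mcode p n @ [0])"
  using is_mcode_mshift by (simp add: is_mcode_iff)

lemma mshift_0 [simp]: "mshift 0 = 0"
  by (simp add: mshift_def)

lemma mshift_one: "mshift 1 = p - 2"
  using p_ge_5 mcode_one by (simp add: mshift_def mval_Cons)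

lemma mshift_less_Suc: "mshift n < mshift (Suc n)"
proof (cases "n = 0")
  case True
  then show ?thesis
    using mshift_one p_ge_5 by simp
next
  case False
  then have "mval p (mcode p n @ [0]) < mval p (mcode p (Suc n) @ [0])"
    using is_mcode_mcode is_mcode_mshift[of n]
    by (intro mval_snoc_less_mcode_snoc_zero[of _ n _ "Suc n"]) (auto simp: is_mcode_iff)
  then show ?thesis
    using False int_mshift[of n] int_mshift[of "Suc n"] by simp
qed

lemma strict_mono_mshift: "strict_mono mshift"
  by (simp add: strict_mono_Suc_iff mshift_less_Suc)

lemma mcode_snoc_cases:
  assumes "1 \<le> n"
  obtains b x where "mcode p n = b @ [x]"
  using is_mcode_mcode[OF assms] by (cases "mcode p n" rule: rev_cases) (auto simp: is_mcode_iff)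

lemma mcode_mtrunc:
  assumes "1 \<le> n" "butlast (mcode p n) \<noteq> []"
  shows "mcode p (mtrunc n) = butlast (mcode p n)" "1 \<le> mtrunc n"
proof -
  obtain b x where w: "mcode p n = b @ [x]"
    using mcode_snoc_cases[OF assms(1)] .
  then have "is_mcode p b (mtrunc n)"
    using is_mcode_mcode[OF assms(1)] assms mval_nonneg[of b]
    by (auto simp: is_mcode_iff mtrunc_def dest: admissible_butlast)
  then show "mcode p (mtrunc n) = butlast (mcode p n)" "1 \<le> mtrunc n"
    using w mcode_eqI is_mcode_pos by simp_all
qed

lemma last_mcode_eq_0_iff: "1 \<le> n \<Longrightarrow> last (mcode p n) = 0 \<longleftrightarrow> n \<in> range mshift"
proof
  assume n: "1 \<le> n" and last: "last (mcode p n) = 0"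
  obtain b where w: "mcode p n = b @ [0]"
    using mcode_snoc_cases[OF n] last by (metis last_snoc)
  then have "b \<noteq> []"
    using is_mcode_mcode[OF n] by (auto simp: is_mcode_iff)
  then have "mcode p (mtrunc n) = b" "1 \<le> mtrunc n"
    using mcode_mtrunc[OF n] w by simp_all
  then have "int (mshift (mtrunc n)) = int n"
    using int_mshift is_mcode_mcode[OF n] w by (simp add: is_mcode_iff)
  then show "n \<in> range mshift"
    by (metis of_nat_eq_iff rangeI)
next
  assume n: "1 \<le> n" and "n \<in> range mshift"
  then obtain k where k: "n = mshift k"
    by blast
  with n have "k \<noteq> 0"
    by (cases k) auto
  with k show "last (mcode p n) = 0"
    by (simp add: mcode_mshift)
qed

lemma mtrunc_bounds: "mshift (mtrunc n) \<le> n \<and> n < mshift (Suc (mtrunc n))"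
proof (cases "n = 0")
  case True
  then show ?thesis
    using mshift_less_Suc[of 0] by (simp add: mtrunc_def)
next
  case False
  then have n: "1 \<le> n"
    by simp
  obtain b x where w: "mcode p n = b @ [x]"
    using mcode_snoc_cases[OF n] .
  have code: "is_mcode p (b @ [x]) n"
    using is_mcode_mcode[OF n] w by simp
  show ?thesis
  proof (cases "b = []")
    case True
    then have "mtrunc n = 0" "n = x" "x \<le> p - 3"
      using n w code by (auto simp: mtrunc_def is_mcode_iff admissible_def)
    then show ?thesis
      using mshift_one p_ge_5 by simp
  next
    case False
    define k where "k = mtrunc n"
    have k: "mcode p k = b" "1 \<le> k"
      using mcode_mtrunc[OF n] w False by (simp_all add: k_def)
    have "int n = int x + mval p (b @ [0])"
      using code mval_snoc[of p b x] by (simp add: is_mcode_iff)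
    then have "mshift k \<le> n"
      using int_mshift[OF k(2)] k(1) by simp
    moreover have "mval p (b @ [x]) < mval p (mcode p (Suc k) @ [0])"
      using is_mcode_mcode[OF k(2)] is_mcode_mcode[of "Suc k"] code k(1)
      by (intro mval_snoc_less_mcode_snoc_zero[of _ k _ "Suc k"]) (auto simp: is_mcode_iff)
    then have "n < mshift (Suc k)"
      using code int_mshift[of "Suc k"] by (simp add: is_mcode_iff)
    ultimately show ?thesis
      by (simp add: k_def)
  qed
qed

lemma mtrunc_eqI: "mshift k \<le> n \<Longrightarrow> n < mshift (Suc k) \<Longrightarrow> mtrunc n = k"
proof -
  assume "mshift k \<le> n" "n < mshift (Suc k)"
  then have "mshift k < mshift (Suc (mtrunc n))" "mshift (mtrunc n) < mshift (Suc k)"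
    using mtrunc_bounds[of n] by linarith+
  then have "k < Suc (mtrunc n)" "mtrunc n < Suc k"
    using strict_mono_mshift by (simp_all add: strict_mono_less)
  then show ?thesis
    by simp
qed

lemma mtrunc_step:
  assumes n: "1 \<le> n"
  shows "mtrunc n = mtrunc (n - 1) + (if n \<in> range mshift then 1 else 0)"
proof (cases "n \<in> range mshift")
  case True
  then obtain j where j: "n = mshift j"
    by blast
  with n have "j \<noteq> 0"
    by (cases j) auto
  then have "mshift (j - 1) < mshift j"
    using strict_mono_mshift by (simp add: strict_mono_less)
  then have "mtrunc (n - 1) = j - 1"
    using j \<open>j \<noteq> 0\<close> by (intro mtrunc_eqI) simp_all
  moreover have "mtrunc n = j"
    using j mshift_less_Suc by (intro mtrunc_eqI) simp_all
  ultimately show ?thesis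
    using True \<open>j \<noteq> 0\<close> by simp
next
  case False
  then have "mshift (mtrunc n) \<noteq> n"
    by (metis rangeI)
  then have "mtrunc (n - 1) = mtrunc n"
    using mtrunc_bounds[of n] by (intro mtrunc_eqI) auto
  then show ?thesis
    using False by simp
qed

lemma int_mshift_eq: "int (mshift n) = (int p - 2) * int n - int (mtrunc n)"
proof (cases "n = 0")
  case False
  then have n: "1 \<le> n"
    by simp
  have "int (mtrunc n) = mval p (butlast (mcode p n))"
    using False mval_nonneg by (simp add: mtrunc_def)
  then show ?thesis
    using int_mshift[OF n] is_mcode_mcode[OF n] mval_snoc_zero[of p "mcode p n"]
    by (simp add: is_mcode_iff)
qed (simp add: mtrunc_def)

lemma mshift_Suc: "mshift (Suc n) = mshift n + nsons p (last (mcode p (Suc n)) = 0)"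
proof -
  have "int (mshift (Suc n)) = int (mshift n) + (int p - 2) - int (mtrunc (Suc n) - mtrunc n)"
    using int_mshift_eq[of n] int_mshift_eq[of "Suc n"] mtrunc_step[of "Suc n"]
    by (simp add: algebra_simps)
  then show ?thesis
    using mtrunc_step[of "Suc n"] last_mcode_eq_0_iff[of "Suc n"] p_ge_5
    by (auto simp: nsons_def)
qed

lemma two_le_nsons: "2 \<le> nsons p b"
  using p_ge_5 by (cases b) (simp_all add: nsons_def)

lemma last_mcode_eq_0_iff_in_block:
  assumes "mshift v + 2 \<le> k" "k \<le> mshift (Suc v) + 1"
  shows "last (mcode p k) = 0 \<longleftrightarrow> k = mshift (Suc v)"
proof
  assume "last (mcode p k) = 0"
  then obtain j where j: "k = mshift j"
    using assms last_mcode_eq_0_iff[of k] by auto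
  have "mshift v < mshift j" "mshift j < mshift (Suc (Suc v))"
    using assms j mshift_Suc[of "Suc v"] two_le_nsons[of "last (mcode p (Suc (Suc v))) = 0"]
    by simp_all
  then have "v < j" "j < Suc (Suc v)"
    using strict_mono_mshift by (simp_all add: strict_mono_less)
  then show "k = mshift (Suc v)"
    using j by (simp add: less_Suc_eq)
qed (simp add: mcode_mshift)

lemma colours_penultimate:
  "length (colours p penultimate v) = mshift v + 1 \<and>
   (\<forall>i < mshift v + 1. colours p penultimate v ! i \<longleftrightarrow> last (mcode p (Suc i)) = 0)"
proof (induction v)
  case 0
  then show ?case
    using mcode_one by simp
next
  case (Suc v)
  define C where "C = colours p penultimate v"
  define N where "N = nsons p (C ! v)"
  have len_C: "length C = mshift v + 1"
    using Suc.IH by (simp add: C_def)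
  have "v < mshift v + 1"
    using strict_mono_imp_increasing[OF strict_mono_mshift, of v] by simp
  then have "C ! v \<longleftrightarrow> last (mcode p (Suc v)) = 0"
    using Suc.IH by (simp add: C_def)
  then have mshift_Suc_v: "mshift (Suc v) = mshift v + N"
    by (simp add: mshift_Suc N_def)
  have C_Suc: "colours p penultimate (Suc v) = C @ map (\<lambda>i. i = N - 1) [1..<N + 1]"
    by (simp add: C_def N_def son_colours_def penultimate_def)
  have "colours p penultimate (Suc v) ! i \<longleftrightarrow> last (mcode p (Suc i)) = 0"
    if i: "i < mshift (Suc v) + 1" for i
  proof (cases "i < mshift v + 1")
    case True
    then show ?thesis
      using Suc.IH C_Suc len_C by (simp add: nth_append C_def)
  next
    case False
    define j where "j = i - (mshift v + 1)"
    have j: "i = mshift v + 1 + j" "j < N"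
      using False i mshift_Suc_v by (simp_all add: j_def)
    have "colours p penultimate (Suc v) ! i \<longleftrightarrow> Suc j = N - 1"
      using C_Suc len_C j by (simp add: nth_append)
    moreover have "last (mcode p (Suc i)) = 0 \<longleftrightarrow> Suc i = mshift (Suc v)"
      using last_mcode_eq_0_iff_in_block[of v "Suc i"] j mshift_Suc_v by simp
    moreover have "Suc j = N - 1 \<longleftrightarrow> Suc i = mshift (Suc v)"
      using j mshift_Suc_v two_le_nsons[of "C ! v"] unfolding N_def by linarith
    ultimately show ?thesis
      by simp
  qed
  then show ?case
    using C_Suc len_C mshift_Suc_v by simp
qed

lemma is_black_penultimate_iff: "1 \<le> \<nu> \<Longrightarrow> is_black p penultimate \<nu> \<longleftrightarrow> last (mcode p \<nu>) = 0"
  using colours_penultimate[of \<nu>] strict_mono_imp_increasing[OF strict_mono_mshift, of \<nu>]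
  by (simp add: is_black_def)

lemma sons_penultimate: "sons p penultimate (Suc v) = {mshift v + 2 .. mshift (Suc v) + 1}"
  using colours_penultimate[of v] colours_penultimate[of "Suc v"] by (simp add: sons_def)

lemma preferred_son_property_penultimate: "preferred_son_property p penultimate"
  unfolding preferred_son_property_def
proof (intro allI impI conjI)
  fix \<nu> :: nat
  assume \<nu>: "1 \<le> \<nu>"
  then obtain v where v: "\<nu> = Suc v"
    by (cases \<nu>) auto
  have "mshift v + 2 \<le> mshift \<nu>"
    using v mshift_Suc[of v] two_le_nsons[of "last (mcode p \<nu>) = 0"] by simp
  then have preferred: "s \<in> sons p penultimate \<nu> \<and> last (mcode p s) = 0 \<longleftrightarrow> s = mshift \<nu>" for s
    using last_mcode_eq_0_iff_in_block[of v s] v sons_penultimate by auto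
  then show "\<exists>!s. s \<in> sons p penultimate \<nu> \<and> last (mcode p s) = 0"
    by simp
  show "\<forall>s\<in>sons p penultimate \<nu>. last (mcode p s) = 0 \<longrightarrow> mcode p s = mcode p \<nu> @ [0]"
  proof (intro ballI impI)
    fix s
    assume "s \<in> sons p penultimate \<nu>" "last (mcode p s) = 0"
    then have "s = mshift \<nu>"
      using preferred by blast
    then show "mcode p s = mcode p \<nu> @ [0]"
      using mcode_mshift[OF \<nu>] by simp
  qed
qed

end

theorem theorem5:
  fixes p :: nat
  assumes "p \<ge> 5"
  shows "preferred_son_property p penultimate \<and>
         (\<forall>\<nu>\<ge>1. is_black p penultimate \<nu> \<longleftrightarrow> last (mcode p \<nu>) = 0)"
proof -
  interpret metallic p
    using assms by unfold_locales
  show ?thesis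
    using preferred_son_property_penultimate is_black_penultimate_iff by blast
qed

end
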